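(* Let $\mathfrak A=\{(a,\alpha)\in\mathbb R^2:-1\le\alpha<a\le1\}$ and $\Omega=\{(\lambda,\mu)\in\mathbb R^2:\lambda\ge1,\ \mu\ge1\}$. Consider the system $$ \begin{cases} 2\,(a+\alpha)(3-a\alpha-a-\alpha)(3-a\alpha+a+\alpha)+(\lambda-\mu)(a-\alpha)^3=0,\\ (\lambda+\mu)^2(a-\alpha)^6=4\,(3+a\alpha)^3(1-a\alpha)(2+a+\alpha)(2-a-\alpha). \end{cases} $$ This system defines a one-to-one correspondence between $\mathfrak A$ and $\Omega$ (for each $(a,\alpha)\in\mathfrak A$ there is exactly one $(\lambda,\mu)\in\Omega$ solving it together with $(a,\alpha)$, and this assignment is a bijection $\mathfrak A\to\Omega$). Moreover, this bijection maps $\{(a,\alpha):-1<\alpha<a<1\}$ onto the interior $\{\lambda>1,\mu>1\}$ of $\Omega$, the side $\{a=1\}$ of $\mathfrak A$ onto the ray $\{\lambda=1\}\subset\Omega$, the side $\{\alpha=-1\}$ onto the ray $\{\mu=1\}\subset\Omega$, and the vertex $(a,\alpha)=(1,-1)$ onto the point $(\lambda,\mu)=(1,1)$. *)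

theory Defs
  imports Complex_Main
begin

definition frakA :: "(real \<times> real) set" where
  "frakA = {(a, al). -1 \<le> al \<and> al < a \<and> a \<le> 1}"

definition Omega :: "(real \<times> real) set" where
  "Omega = {(l, m). l \<ge> 1 \<and> m \<ge> 1}"

definition sys :: "real \<Rightarrow> real \<Rightarrow> real \<Rightarrow> real \<Rightarrow> bool" where
  "sys a al l m \<longleftrightarrow>
     2 * (a + al) * (3 - a*al - a - al) * (3 - a*al + a + al) + (l - m) * (a - al)^3 = 0 \<and>
     (l + m)^2 * (a - al)^6 = 4 * (3 + a*al)^3 * (1 - a*al) * (2 + a + al) * (2 - a - al)"

definition corr :: "real \<times> real \<Rightarrow> real \<times> real" where
  "corr p = (THE q. q \<in> Omega \<and> sys (fst p) (snd p) (fst q) (snd q))"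

end

theory Submission
  imports Defs "HOL-Real_Asymp.Real_Asymp"
begin

text \<open>
  On \<open>frakA\<close> the system is solved explicitly: with \<open>W = wpoly a \<alpha>\<close> and \<open>N = npoly a \<alpha>\<close>,
  \<open>\<lambda> + \<mu> = 2\<surd>W / (a - \<alpha>)\<^sup>3\<close> and \<open>\<mu> - \<lambda> = 2 N / (a - \<alpha>)\<^sup>3\<close>. The pair \<open>(\<lambda>, \<mu>)\<close> is
  equivalently encoded by \<open>((\<lambda> + \<mu>)/2)\<^sup>2 = W / (a - \<alpha>)\<^sup>6\<close> and \<open>(\<mu> - \<lambda>)/(\<mu> + \<lambda>) = N / \<surd>W\<close>.
  The first is strictly decreasing in \<open>a\<close> and increasing in \<open>\<alpha>\<close>, the second strictly
  increasing in both; the signs of the derivatives are certified by polynomials with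
  positive coefficients in \<open>1 + \<alpha>\<close>, \<open>1 - a\<close>, \<open>a - \<alpha>\<close>. This gives injectivity, and shows that
  \<open>\<lambda> \<ge> 1\<close> with equality exactly on \<open>a = 1\<close>; the symmetry \<open>(a, \<alpha>) \<mapsto> (-\<alpha>, -a)\<close> swaps \<open>\<lambda>\<close>
  and \<open>\<mu>\<close>. For surjectivity, \<open>\<lambda>(\<cdot>, \<alpha>)\<close> decreases from \<open>+\<infinity>\<close> to \<open>1\<close> on \<open>(\<alpha>, 1]\<close>, so a
  level set \<open>\<lambda> = l > 1\<close> is the graph of a continuous function of \<open>\<alpha>\<close>; along it the ratio
  \<open>(\<mu> - \<lambda>)/(\<mu> + \<lambda>)\<close> runs from \<open>(1 - l)/(1 + l)\<close> at \<open>\<alpha> = -1\<close> to values arbitrarily close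
  to \<open>1\<close> near the corner \<open>a = \<alpha> = 1\<close>, and the intermediate value theorem finds every \<open>\<mu> \<ge> 1\<close>.
\<close>

definition wpoly :: "real \<Rightarrow> real \<Rightarrow> real" where
  "wpoly a b = (3 + a*b)^3 * (1 - a*b) * (2 + a + b) * (2 - a - b)"

definition npoly :: "real \<Rightarrow> real \<Rightarrow> real" where
  "npoly a b = (a + b) * (3 - a*b - a - b) * (3 - a*b + a + b)"

definition wpoly_da :: "real \<Rightarrow> real \<Rightarrow> real" where
  "wpoly_da a b = 3*(3+a*b)^2*b*(1-a*b)*(2+a+b)*(2-a-b) - (3+a*b)^3*b*(2+a+b)*(2-a-b)
     + (3+a*b)^3*(1-a*b)*(2-a-b) - (3+a*b)^3*(1-a*b)*(2+a+b)"

definition npoly_da :: "real \<Rightarrow> real \<Rightarrow> real" where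
  "npoly_da a b = (3-a*b-a-b)*(3-a*b+a+b) - (a+b)*(b+1)*(3-a*b+a+b) + (a+b)*(3-a*b-a-b)*(1-b)"

definition lam :: "real \<Rightarrow> real \<Rightarrow> real" where
  "lam a b = (sqrt (wpoly a b) - npoly a b) / (a - b)^3"

definition mu :: "real \<Rightarrow> real \<Rightarrow> real" where
  "mu a b = (sqrt (wpoly a b) + npoly a b) / (a - b)^3"

definition mean_sq :: "real \<Rightarrow> real \<Rightarrow> real" where
  "mean_sq a b = wpoly a b / (a - b)^6"

definition skew :: "real \<Rightarrow> real \<Rightarrow> real" where
  "skew a b = npoly a b / sqrt (wpoly a b)"

lemma wpoly_pos:
  assumes "-1 \<le> b" "b \<le> a" "a \<le> 1" "\<not> (a = b \<and> \<bar>a\<bar> = 1)"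
  shows "wpoly a b > 0"
proof -
  have "2*(1 - a*b) = (1-a)*(1+b) + (1+a)*(1-b)" by algebra
  moreover have "(1-a)*(1+b) + (1+a)*(1-b) > 0"
    using assms by (smt (verit) mult_nonneg_nonneg mult_pos_pos)
  ultimately have "1 - a*b > 0" by simp
  moreover have "2*(1 + a*b) = (1+a)*(1+b) + (1-a)*(1-b)" by algebra
  then have "3 + a*b > 0" using assms by (smt (verit) mult_nonneg_nonneg)
  moreover have "2 + a + b > 0" "2 - a - b > 0" using assms by auto
  ultimately show ?thesis unfolding wpoly_def by simp
qed

lemma wpoly_swap: "wpoly (-b) (-a) = wpoly a b"
  unfolding wpoly_def by (simp add: algebra_simps)

lemma npoly_swap: "npoly (-b) (-a) = - npoly a b"
  unfolding npoly_def by (simp add: algebra_simps)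

lemma lam_swap: "lam (-b) (-a) = mu a b"
  unfolding lam_def mu_def wpoly_swap npoly_swap by (simp add: algebra_simps)

lemma mean_sq_swap: "mean_sq (-b) (-a) = mean_sq a b"
  unfolding mean_sq_def wpoly_swap by (simp add: algebra_simps)

lemma skew_swap: "skew (-b) (-a) = - skew a b"
  unfolding skew_def wpoly_swap npoly_swap by simp

lemma lam_mu_mean_sq_skew:
  assumes "b < a" "wpoly a b > 0"
  shows "lam a b = sqrt (mean_sq a b) * (1 - skew a b)"
    and "mu a b = sqrt (mean_sq a b) * (1 + skew a b)"
proof -
  have "sqrt ((a - b)^6) = (a - b)^3"
    using assms real_sqrt_abs[of "(a - b)^3"] by (simp add: power_mult[symmetric])
  then have sqrt_mean_sq: "sqrt (mean_sq a b) = sqrt (wpoly a b) / (a - b)^3"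
    by (simp add: mean_sq_def real_sqrt_divide)
  show "lam a b = sqrt (mean_sq a b) * (1 - skew a b)"
    and "mu a b = sqrt (mean_sq a b) * (1 + skew a b)"
    unfolding lam_def mu_def skew_def sqrt_mean_sq using assms by (simp_all add: field_simps)
qed

lemma mean_sq_pos:
  assumes "-1 \<le> b" "b < a" "a \<le> 1"
  shows "mean_sq a b > 0"
  using assms wpoly_pos[of b a] by (simp add: mean_sq_def)

lemma sqrt_mean_sq_eq:
  assumes "-1 \<le> b" "b < a" "a \<le> 1"
  shows "sqrt (mean_sq a b) = (lam a b + mu a b) / 2"
  using assms lam_mu_mean_sq_skew[of b a] wpoly_pos[of b a] by (simp add: algebra_simps)

lemma skew_eq:
  assumes "-1 \<le> b" "b < a" "a \<le> 1"
  shows "skew a b = (mu a b - lam a b) / (lam a b + mu a b)"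
proof -
  have "mu a b - lam a b = 2 * sqrt (mean_sq a b) * skew a b" "sqrt (mean_sq a b) > 0"
    using assms lam_mu_mean_sq_skew[of b a] wpoly_pos[of b a] mean_sq_pos[of b a]
    by (simp_all add: algebra_simps)
  then show ?thesis using sqrt_mean_sq_eq[OF assms] by (simp add: field_simps)
qed

lemma sys_iff_lam_mu:
  assumes "-1 \<le> b" "b < a" "a \<le> 1" "l + m > 0"
  shows "sys a b l m \<longleftrightarrow> l = lam a b \<and> m = mu a b"
proof -
  define d where "d = (a - b)^3"
  define q where "q = sqrt (wpoly a b)"
  have d: "d > 0" using assms by (simp add: d_def)
  have q: "q > 0" "q^2 = wpoly a b" using wpoly_pos[of b a] assms by (auto simp: q_def)
  have "sys a b l m \<longleftrightarrow> 2 * npoly a b + (l - m) * d = 0 \<and> ((l + m) * d)^2 = (2 * q)^2"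
    unfolding sys_def npoly_def power_mult_distrib q(2) wpoly_def d_def
    by (simp add: algebra_simps flip: power_mult)
  also have "((l + m) * d)^2 = (2 * q)^2 \<longleftrightarrow> (l + m) * d = 2 * q"
    using assms d q by (intro power2_eq_iff_nonneg) auto
  also have "2 * npoly a b + (l - m) * d = 0 \<and> (l + m) * d = 2 * q \<longleftrightarrow>
      l = (q - npoly a b) / d \<and> m = (q + npoly a b) / d"
    using d by (auto simp: field_simps)
  finally show ?thesis by (simp add: lam_def mu_def q_def d_def)
qed

section \<open>Monotonicity of \<open>mean_sq\<close> and \<open>skew\<close>\<close>

lemma has_derivative_wpoly: "((\<lambda>a. wpoly a b) has_real_derivative wpoly_da a b) (at a)"
  unfolding wpoly_def wpoly_da_def
  by (rule derivative_eq_intros refl)+ (simp add: eval_nat_numeral, algebra)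

lemma has_derivative_npoly: "((\<lambda>a. npoly a b) has_real_derivative npoly_da a b) (at a)"
  unfolding npoly_def npoly_da_def
  by (rule derivative_eq_intros refl)+ (simp add: eval_nat_numeral, algebra)

text \<open>In the coordinates \<open>x = 1 + b\<close>, \<open>y = 1 - a\<close>, \<open>z = a - b\<close>, which are nonnegative
  on \<open>frakA\<close>, both numerators below become polynomials with positive coefficients.\<close>

lemma mean_sq_deriv_numerator_pos:
  assumes "-1 \<le> b" "b < a" "a \<le> 1"
  shows "6 * wpoly a b - wpoly_da a b * (a - b) > 0"
proof -
  define x y z where "x = 1 + b" and "y = 1 - a" and "z = a - b"
  have numerator: "6 * wpoly a b - wpoly_da a b * (a - b) = (1/2)*z^10 + (11/2)*y*z^9 +
      26*y^2*z^8 + 69*y^3*z^7 + (225/2)*y^4*z^6 + (231/2)*y^5*z^5 + 73*y^6*z^4 + 26*y^7*z^3 +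
      4*y^8*z^2 + (11/2)*x*z^9 + 53*x*y*z^8 + 220*x*y^2*z^7 + 516*x*y^3*z^6 + (1503/2)*x*y^4*z^5 +
      699*x*y^5*z^4 + 407*x*y^6*z^3 + 136*x*y^7*z^2 + 20*x*y^8*z + (53/2)*x^2*z^8 +
      (445/2)*x^2*y*z^7 + 801*x^2*y^2*z^6 + 1617*x^2*y^3*z^5 + (4005/2)*x^2*y^4*z^4 +
      (3117/2)*x^2*y^5*z^3 + 746*x^2*y^6*z^2 + 202*x^2*y^7*z + 24*x^2*y^8 + (147/2)*x^3*z^7 +
      534*x^3*y*z^6 + 1641*x^3*y^2*z^5 + 2770*x^3*y^3*z^4 + (5551/2)*x^3*y^4*z^3 +
      1648*x^3*y^5*z^2 + 534*x^3*y^6*z + 72*x^3*y^7 + 129*x^4*z^6 + 804*x^4*y*z^5 +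
      (4131/2)*x^4*y^2*z^4 + (5605/2)*x^4*y^3*z^3 + 2122*x^4*y^4*z^2 + 854*x^4*y^5*z +
      144*x^4*y^6 + 147*x^5*z^5 + 780*x^5*y*z^4 + (3255/2)*x^5*y^2*z^3 + 1676*x^5*y^3*z^2 +
      850*x^5*y^4*z + 168*x^5*y^5 + 106*x^6*z^4 + 479*x^6*y*z^3 + 778*x^6*y^2*z^2 +
      546*x^6*y^3*z + 144*x^6*y^4 + 44*x^7*z^3 + 172*x^7*y*z^2 + 206*x^7*y^2*z + 72*x^7*y^3 +
      8*x^8*z^2 + 28*x^8*y*z + 24*x^8*y^2"
    unfolding x_def y_def z_def wpoly_def wpoly_da_def by algebra
  have "x \<ge> 0" "y \<ge> 0" "z > 0" using assms by (auto simp: x_def y_def z_def)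
  then show ?thesis
    unfolding numerator by (intro add_pos_nonneg mult_nonneg_nonneg zero_le_power zero_less_power; simp)
qed

lemma skew_deriv_numerator_pos:
  assumes "-1 \<le> b" "b < a" "a \<le> 1"
  shows "2 * npoly_da a b * wpoly a b - npoly a b * wpoly_da a b > 0"
proof -
  define x y z where "x = 1 + b" and "y = 1 - a" and "z = a - b"
  define g where "g = (3+a*b)*(1-a*b)*(4*(3-a*b)^2 - 12*(a+b)^2 + 2*(a+b)^4)
    + 2*b*(a+b)*(4-(a+b)^2)*(-9+18*(a*b)-5*(a*b)^2-(a*b)*(a+b)^2)"
  have "\<bar>a*b\<bar> \<le> 1" using assms by (simp add: abs_mult mult_le_one)
  then have "3 + a*b \<noteq> 0" by linarith
  have numerator: "2 * npoly_da a b * wpoly a b - npoly a b * wpoly_da a b = 2 * (3 + a*b)^2 * g"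
    unfolding g_def wpoly_def wpoly_da_def npoly_def npoly_da_def by algebra
  have g_eq: "g = 1*z^8 + 5*y*z^7 + 9*y^2*z^6 + 7*y^3*z^5 + 2*y^4*z^4 + 9*x*z^7 + 48*x*y*z^6 +
      95*x*y^2*z^5 + 82*x*y^3*z^4 + 26*x*y^4*z^3 + 26*x^2*z^6 + 150*x^2*y*z^5 + 325*x^2*y^2*z^4 +
      309*x^2*y^3*z^3 + 108*x^2*y^4*z^2 + 30*x^3*z^5 + 188*x^3*y*z^4 + 447*x^3*y^2*z^3 +
      468*x^3*y^3*z^2 + 180*x^3*y^4*z + 12*x^4*z^4 + 82*x^4*y*z^3 + 216*x^4*y^2*z^2 +
      252*x^4*y^3*z + 108*x^4*y^4"
    unfolding g_def x_def y_def z_def by algebra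
  have "x \<ge> 0" "y \<ge> 0" "z > 0" using assms by (auto simp: x_def y_def z_def)
  then have "g > 0"
    unfolding g_eq by (intro add_pos_nonneg mult_nonneg_nonneg zero_le_power zero_less_power; simp)
  then show ?thesis unfolding numerator using \<open>3 + a*b \<noteq> 0\<close> by simp
qed

lemma has_derivative_mean_sq:
  assumes "a \<noteq> b"
  shows "((\<lambda>a. mean_sq a b) has_real_derivative
           (wpoly_da a b * (a - b) - 6 * wpoly a b) / (a - b)^7) (at a)"
proof -
  have "((\<lambda>a. mean_sq a b) has_real_derivative
           (wpoly_da a b * (a - b)^6 - wpoly a b * (6 * (a - b)^5)) / ((a - b)^6 * (a - b)^6)) (at a)"
    unfolding mean_sq_def using assms
    by (intro DERIV_divide has_derivative_wpoly) (auto intro!: derivative_eq_intros)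
  moreover have "(w' * d^6 - w * (6 * d^5)) / (d^6 * d^6) = (w' * d - 6 * w) / d^7"
    if "d \<noteq> 0" for w w' d :: real
    using that by (simp add: field_simps eval_nat_numeral)
  ultimately show ?thesis using assms by simp
qed

lemma has_derivative_skew:
  assumes "wpoly a b > 0"
  shows "((\<lambda>a. skew a b) has_real_derivative
           (2 * npoly_da a b * wpoly a b - npoly a b * wpoly_da a b) / (2 * wpoly a b * sqrt (wpoly a b))) (at a)"
proof -
  have "((\<lambda>a. sqrt (wpoly a b)) has_real_derivative inverse (sqrt (wpoly a b)) / 2 * wpoly_da a b) (at a)"
    by (rule DERIV_chain2[OF DERIV_real_sqrt[OF assms] has_derivative_wpoly])
  then have "((\<lambda>a. skew a b) has_real_derivative
     (npoly_da a b * sqrt (wpoly a b) - npoly a b * (inverse (sqrt (wpoly a b)) / 2 * wpoly_da a b))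
       / (sqrt (wpoly a b) * sqrt (wpoly a b))) (at a)"
    unfolding skew_def using assms by (intro DERIV_divide has_derivative_npoly) auto
  moreover have "(npoly_da a b * sqrt (wpoly a b) - npoly a b * (inverse (sqrt (wpoly a b)) / 2 * wpoly_da a b))
       / (sqrt (wpoly a b) * sqrt (wpoly a b))
     = (2 * npoly_da a b * wpoly a b - npoly a b * wpoly_da a b) / (2 * wpoly a b * sqrt (wpoly a b))"
    using assms by (simp add: field_simps)
  ultimately show ?thesis by simp
qed

lemma mean_sq_strict_decreasing:
  assumes "-1 \<le> b" "b < a1" "a1 < a2" "a2 \<le> 1"
  shows "mean_sq a2 b < mean_sq a1 b"
proof (rule DERIV_neg_imp_decreasing_open[OF \<open>a1 < a2\<close>])
  fix a assume "a1 < a" "a < a2"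
  with assms have "b < a" "a \<le> 1" by auto
  with assms have "wpoly_da a b * (a - b) - 6 * wpoly a b < 0" "(a - b)^7 > 0"
    using mean_sq_deriv_numerator_pos by auto
  then have "(wpoly_da a b * (a - b) - 6 * wpoly a b) / (a - b)^7 < 0" by (rule divide_neg_pos)
  with has_derivative_mean_sq[of a b] \<open>b < a\<close>
  show "\<exists>y. ((\<lambda>a. mean_sq a b) has_real_derivative y) (at a) \<and> y < 0" by auto
next
  show "continuous_on {a1..a2} (\<lambda>a. mean_sq a b)"
    using assms by (intro continuous_at_imp_continuous_on ballI DERIV_isCont[OF has_derivative_mean_sq]) auto
qed

lemma skew_strict_increasing:
  assumes "-1 \<le> b" "b \<le> a1" "a1 < a2" "a2 \<le> 1" "a1 \<noteq> -1"
  shows "skew a1 b < skew a2 b"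
proof (rule DERIV_pos_imp_increasing_open[OF \<open>a1 < a2\<close>])
  fix a assume "a1 < a" "a < a2"
  with assms have "b < a" "a \<le> 1" by auto
  with assms have "wpoly a b > 0" "2 * npoly_da a b * wpoly a b - npoly a b * wpoly_da a b > 0"
    using wpoly_pos[of b a] skew_deriv_numerator_pos[of b a] by auto
  with has_derivative_skew[of a b]
  show "\<exists>y. ((\<lambda>a. skew a b) has_real_derivative y) (at a) \<and> y > 0" by auto
next
  have "wpoly a b > 0" if "a \<in> {a1..a2}" for a
    using that assms by (intro wpoly_pos) auto
  then show "continuous_on {a1..a2} (\<lambda>a. skew a b)"
    by (intro continuous_at_imp_continuous_on ballI DERIV_isCont[OF has_derivative_skew])
qed

lemma mean_sq_strict_increasing_snd:
  assumes "-1 \<le> b1" "b1 < b2" "b2 < a" "a \<le> 1"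
  shows "mean_sq a b1 < mean_sq a b2"
  using mean_sq_strict_decreasing[of "-a" "-b2" "-b1"] assms by (simp add: mean_sq_swap)

lemma skew_strict_increasing_snd:
  assumes "-1 \<le> b1" "b1 < b2" "b2 < a" "a \<le> 1"
  shows "skew a b1 < skew a b2"
  using skew_strict_increasing[of "-a" "-b2" "-b1"] assms skew_swap[where a=a and b=b1] skew_swap[where a=a and b=b2] by simp

section \<open>The boundary \<open>a = 1\<close> and the bounds \<open>\<lambda>, \<mu> \<ge> 1\<close>\<close>

lemma sqrt_wpoly_one:
  assumes "b \<le> 1"
  shows "sqrt (wpoly 1 b) = (3 + b)^2 * (1 - b)"
proof -
  have "wpoly 1 b = ((3 + b)^2 * (1 - b))^2" unfolding wpoly_def by algebra
  then show ?thesis using assms by simp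
qed

lemma lam_one:
  assumes "b < 1"
  shows "lam 1 b = 1"
proof -
  have "sqrt (wpoly 1 b) - npoly 1 b = (1 - b)^3"
    using assms by (simp add: sqrt_wpoly_one npoly_def) algebra
  then show ?thesis using assms by (simp add: lam_def)
qed

lemma mu_one:
  assumes "b < 1"
  shows "mu 1 b = 2 * ((3 + b) / (1 - b))^2 - 1"
proof -
  have "sqrt (wpoly 1 b) + npoly 1 b = (1 - b) * (2 * (3 + b)^2 - (1 - b)^2)"
    using assms by (simp add: sqrt_wpoly_one npoly_def) algebra
  then have "mu 1 b = (1 - b) * (2 * (3 + b)^2 - (1 - b)^2) / ((1 - b) * (1 - b)^2)"
    by (simp add: mu_def power3_eq_cube power2_eq_square)
  also have "\<dots> = 2 * ((3 + b) / (1 - b))^2 - 1"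
    using assms by (simp add: field_simps)
  finally show ?thesis .
qed

lemma skew_lt_one:
  assumes "-1 \<le> b" "b < a" "a \<le> 1"
  shows "skew a b < 1"
proof -
  have "0 < sqrt (mean_sq 1 b) * (1 - skew 1 b)"
    using assms lam_one[of b] lam_mu_mean_sq_skew(1)[of b 1] wpoly_pos[of b 1] by simp
  then have "skew 1 b < 1"
    using mean_sq_pos[of b 1] assms by (simp add: zero_less_mult_iff)
  moreover have "skew a b \<le> skew 1 b"
    using assms skew_strict_increasing[of b a 1] by (cases "a = 1") auto
  ultimately show ?thesis by simp
qed

lemma lam_strict_decreasing:
  assumes "-1 \<le> b" "b < a1" "a1 < a2" "a2 \<le> 1"
  shows "lam a2 b < lam a1 b"
proof -
  have "sqrt (mean_sq a2 b) < sqrt (mean_sq a1 b)"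
    using mean_sq_strict_decreasing[OF assms] by simp
  moreover have "1 - skew a2 b < 1 - skew a1 b"
    using skew_strict_increasing[of b a1 a2] assms by simp
  moreover have "0 < 1 - skew a2 b" "0 \<le> sqrt (mean_sq a2 b)"
    using skew_lt_one[of b a2] mean_sq_pos[of b a2] assms by auto
  ultimately have "sqrt (mean_sq a2 b) * (1 - skew a2 b) < sqrt (mean_sq a1 b) * (1 - skew a1 b)"
    by (intro mult_strict_mono) auto
  then show ?thesis
    using assms lam_mu_mean_sq_skew(1) wpoly_pos[of b a1] wpoly_pos[of b a2] by simp
qed

lemma lam_gt_one:
  assumes "-1 \<le> b" "b < a" "a < 1"
  shows "lam a b > 1"
  using lam_strict_decreasing[of b a 1] lam_one[of b] assms by simp

lemma mu_gt_one:
  assumes "-1 < b" "b < a" "a \<le> 1"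
  shows "mu a b > 1"
  using lam_gt_one[of "-a" "-b"] assms by (simp add: lam_swap)

lemma mu_minus_one:
  assumes "-1 < a"
  shows "mu a (-1) = 1"
  using lam_one[of "-a"] lam_swap[where a=a and b="-1"] assms by simp

lemma lam_ge_one:
  assumes "-1 \<le> b" "b < a" "a \<le> 1"
  shows "1 \<le> lam a b"
  using assms lam_gt_one[of b a] lam_one[of b] by (cases "a = 1") auto

lemma mu_ge_one:
  assumes "-1 \<le> b" "b < a" "a \<le> 1"
  shows "1 \<le> mu a b"
  using assms mu_gt_one[of b a] mu_minus_one[of a] by (cases "b = -1") auto

lemma lam_eq_one_iff:
  assumes "-1 \<le> b" "b < a" "a \<le> 1"
  shows "lam a b = 1 \<longleftrightarrow> a = 1"
  using lam_gt_one[of b a] lam_one[of b] assms by force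

lemma mu_eq_one_iff:
  assumes "-1 \<le> b" "b < a" "a \<le> 1"
  shows "mu a b = 1 \<longleftrightarrow> b = -1"
  using mu_gt_one[of b a] mu_minus_one[of a] assms by force

section \<open>Injectivity\<close>

lemma mean_sq_skew_inj:
  assumes "-1 \<le> b1" "b1 < a1" "a1 \<le> a2" "a2 \<le> 1" "-1 \<le> b2" "b2 < a2"
    and "mean_sq a1 b1 = mean_sq a2 b2" "skew a1 b1 = skew a2 b2"
  shows "a1 = a2 \<and> b1 = b2"
proof (cases "b1 < b2")
  case True
  have "skew a1 b1 \<le> skew a2 b1"
    using skew_strict_increasing[of b1 a1 a2] assms by (cases "a1 = a2") auto
  also have "\<dots> < skew a2 b2"
    using skew_strict_increasing_snd[of b1 b2 a2] True assms by simp
  finally show ?thesis using assms by simp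
next
  case False
  have "mean_sq a2 b2 \<le> mean_sq a2 b1"
    using mean_sq_strict_increasing_snd[of b2 b1 a2] False assms by (cases "b1 = b2") auto
  moreover have "mean_sq a2 b2 < mean_sq a2 b1" if "b2 < b1"
    using mean_sq_strict_increasing_snd[of b2 b1 a2] that assms by simp
  moreover have "mean_sq a2 b1 < mean_sq a1 b1" if "a1 < a2"
    using mean_sq_strict_decreasing[of b1 a1 a2] that assms by simp
  ultimately show ?thesis using False assms by fastforce
qed

lemma inj_on_lam_mu: "inj_on (\<lambda>(a, b). (lam a b, mu a b)) frakA"
proof -
  have "a1 = a2 \<and> b1 = b2" if "(a1, b1) \<in> frakA" "(a2, b2) \<in> frakA" "a1 \<le> a2"
      "lam a1 b1 = lam a2 b2" "mu a1 b1 = mu a2 b2" for a1 b1 a2 b2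
  proof -
    have ab1: "-1 \<le> b1" "b1 < a1" "a1 \<le> 1" and ab2: "-1 \<le> b2" "b2 < a2" "a2 \<le> 1"
      using that(1,2) by (auto simp: frakA_def)
    have "sqrt (mean_sq a1 b1) = sqrt (mean_sq a2 b2)" "skew a1 b1 = skew a2 b2"
      by (simp_all only: sqrt_mean_sq_eq[OF ab1] sqrt_mean_sq_eq[OF ab2]
          skew_eq[OF ab1] skew_eq[OF ab2] that(4,5))
    then show ?thesis using ab1 ab2 that(3) by (intro mean_sq_skew_inj) auto
  qed
  then show ?thesis
    by (intro inj_onI) (clarsimp, metis linorder_le_cases)
qed

section \<open>Surjectivity\<close>

lemma isCont_lam_fst: "a \<noteq> b \<Longrightarrow> isCont (\<lambda>a. lam a b) a"
  unfolding lam_def wpoly_def npoly_def by (intro continuous_intros) simp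

lemma isCont_lam_snd: "a \<noteq> b \<Longrightarrow> isCont (lam a) b"
  unfolding lam_def wpoly_def npoly_def by (intro continuous_intros) simp

lemma continuous_on_skew:
  assumes "continuous_on S f" "continuous_on S g" "\<And>x. x \<in> S \<Longrightarrow> wpoly (f x) (g x) > 0"
  shows "continuous_on S (\<lambda>x. skew (f x) (g x))"
proof -
  have "continuous_on S (\<lambda>x. wpoly (f x) (g x))" "continuous_on S (\<lambda>x. npoly (f x) (g x))"
    unfolding wpoly_def npoly_def by (intro continuous_intros assms)+
  then show ?thesis unfolding skew_def using assms(3) by (intro continuous_intros) force+
qed

lemma filterlim_lam_at_right:
  assumes "-1 \<le> b" "b < 1"
  shows "filterlim (\<lambda>a. lam a b) at_top (at_right b)"
proof (cases "b = -1")
  case True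
  \<comment> \<open>Here the numerator of \<open>lam\<close> also vanishes at \<open>a = b\<close>; use the closed form instead.\<close>
  have "lam a (-1) = 2 * ((3 - a) / (1 + a))^2 - 1" if "-1 < a" for a
    using lam_swap[where a=1 and b="-a"] mu_one[of "-a"] that by simp
  then have "eventually (\<lambda>a. 2 * ((3 - a) / (1 + a))^2 - 1 = lam a (-1)) (at_right (-1))"
    by (auto intro: eventually_mono[OF eventually_at_right_less])
  moreover have "filterlim (\<lambda>a. 2 * ((3 - a) / (1 + a))^2 - 1) at_top (at_right (-1 :: real))"
    by real_asymp
  ultimately show ?thesis using True filterlim_cong by fastforce
next
  case False
  have "skew b b < skew 1 b" using skew_strict_increasing[of b b 1] assms False by simp
  also have "\<dots> < 1" using skew_lt_one[of b 1] assms by simp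
  finally have "npoly b b < sqrt (wpoly b b)"
    using wpoly_pos[of b b] assms False by (simp add: skew_def divide_less_eq)
  moreover have "isCont (\<lambda>a. sqrt (wpoly a b) - npoly a b) b"
    unfolding wpoly_def npoly_def by (intro continuous_intros)
  then have "((\<lambda>a. sqrt (wpoly a b) - npoly a b) \<longlongrightarrow> sqrt (wpoly b b) - npoly b b) (at_right b)"
    unfolding isCont_def by (rule tendsto_mono[OF at_le, rotated]) simp
  moreover have "((\<lambda>a. (a - b)^3) \<longlongrightarrow> 0) (at_right b)"
    by (rule tendsto_eq_intros refl | simp)+
  moreover have "eventually (\<lambda>a. 0 < (a - b)^3) (at_right b)"
    using eventually_at_right_less[of b] by eventually_elim simp
  ultimately show ?thesis unfolding lam_def by (intro LIM_at_top_divide) auto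
qed

lemma ex1_lam_eq:
  assumes "-1 \<le> b" "b < 1" "l > 1"
  shows "\<exists>!a. b < a \<and> a < 1 \<and> lam a b = l"
proof (rule ex_ex1I)
  have "eventually (\<lambda>a. l \<le> lam a b) (at_right b)"
    using filterlim_lam_at_right[OF assms(1,2)] unfolding filterlim_at_top by blast
  then have "eventually (\<lambda>a. l \<le> lam a b \<and> a \<in> {b<..<1}) (at_right b)"
    using eventually_at_right_real[OF assms(2)] by (rule eventually_conj)
  then obtain a' where a': "b < a'" "a' < 1" "l \<le> lam a' b"
    using eventually_happens'[of "at_right b"] by auto
  have "continuous_on {a'..1} (\<lambda>a. lam a b)"
    using a' by (intro continuous_at_imp_continuous_on ballI isCont_lam_fst) auto
  then obtain a where "a' \<le> a" "a \<le> 1" "lam a b = l"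
    using IVT2'[of "\<lambda>a. lam a b" 1 l a'] lam_one[of b] a' assms by auto
  moreover have "a \<noteq> 1" using calculation lam_one[of b] assms by auto
  ultimately show "\<exists>a. b < a \<and> a < 1 \<and> lam a b = l" using a' by (intro exI[of _ a]) auto
next
  fix a1 a2 assume "b < a1 \<and> a1 < 1 \<and> lam a1 b = l" "b < a2 \<and> a2 < 1 \<and> lam a2 b = l"
  then show "a1 = a2"
    using lam_strict_decreasing[of b a1 a2] lam_strict_decreasing[of b a2 a1] assms
    by (cases a1 a2 rule: linorder_cases) auto
qed

definition lam_root :: "real \<Rightarrow> real \<Rightarrow> real" where
  "lam_root l b = (THE a. b < a \<and> a < 1 \<and> lam a b = l)"

lemma lam_root:
  assumes "-1 \<le> b" "b < 1" "l > 1"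
  shows "b < lam_root l b" "lam_root l b < 1" "lam (lam_root l b) b = l"
  using theI'[OF ex1_lam_eq[OF assms]] unfolding lam_root_def by auto

lemma continuous_on_implicit_decreasing:
  fixes g :: "real \<Rightarrow> real \<Rightarrow> real" and r :: "real \<Rightarrow> real"
  assumes root: "\<And>y. y \<in> S \<Longrightarrow> y < r y \<and> r y < 1 \<and> g (r y) y = c"
    and decreasing: "\<And>y a a'. y \<in> S \<Longrightarrow> y < a \<Longrightarrow> a < a' \<Longrightarrow> a' \<le> 1 \<Longrightarrow> g a' y < g a y"
    and cont: "\<And>y a. y \<in> S \<Longrightarrow> y < a \<Longrightarrow> a \<le> 1 \<Longrightarrow> isCont (g a) y"
  shows "continuous_on S r"
  unfolding continuous_on_def tendsto_iff
proof (intro ballI allI impI)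
  fix x e :: real assume x: "x \<in> S" and e: "0 < e"
  define a1 where "a1 = max (r x - e/2) ((x + r x) / 2)"
  define a2 where "a2 = min (r x + e/2) 1"
  have a1: "x < a1" "a1 < r x" "r x - e < a1" and a2: "r x < a2" "a2 \<le> 1" "a2 < r x + e"
    using root[OF x] e
    by (auto simp: a1_def a2_def less_max_iff_disj max_less_iff_conj min_less_iff_conj)
  \<comment> \<open>The signs of \<open>g a1 - c\<close> and \<open>g a2 - c\<close> at \<open>x\<close> persist nearby and trap \<open>r y\<close> in \<open>(a1, a2)\<close>.\<close>
  have "c < g a1 x" "g a2 x < c"
    using decreasing[OF x, of a1 "r x"] decreasing[OF x, of "r x" a2] root[OF x] a1 a2 by auto
  moreover have "continuous (at x within S) (g a1)" "continuous (at x within S) (g a2)"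
    using cont[OF x] a1 a2 by (auto intro: continuous_at_imp_continuous_at_within)
  ultimately have "eventually (\<lambda>y. c < g a1 y) (at x within S)" "eventually (\<lambda>y. g a2 y < c) (at x within S)"
    unfolding continuous_within by (auto intro: order_tendstoD)
  moreover have "eventually (\<lambda>y. y < a1) (at x within S)"
    using order_tendstoD(2)[OF tendsto_ident_at a1(1)] .
  moreover have "eventually (\<lambda>y. y \<in> S) (at x within S)"
    by (simp add: eventually_at_filter)
  ultimately show "eventually (\<lambda>y. dist (r y) (r x) < e) (at x within S)"
  proof eventually_elim
    case (elim y)
    have "\<not> r y \<le> a1"
      using decreasing[of y "r y" a1] root[of y] elim a1 a2 by (cases "r y = a1") auto
    moreover have "\<not> a2 \<le> r y"
      using decreasing[of y a2 "r y"] root[of y] elim a1 a2 by (cases "r y = a2") auto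
    ultimately show ?case using a1 a2 by (simp add: dist_real_def)
  qed
qed

lemma continuous_on_lam_root:
  assumes "S \<subseteq> {-1..<1}" "l > 1"
  shows "continuous_on S (lam_root l)"
proof (rule continuous_on_implicit_decreasing[where g = lam and c = l])
  fix y assume "y \<in> S"
  with assms show "y < lam_root l y \<and> lam_root l y < 1 \<and> lam (lam_root l y) y = l"
    using lam_root[of y l] by auto
next
  fix y a a' :: real assume "y \<in> S" "y < a" "a < a'" "a' \<le> 1"
  with assms show "lam a' y < lam a y" using lam_strict_decreasing[of y a a'] by auto
next
  fix y a :: real assume "y < a"
  then show "isCont (lam a) y" by (intro isCont_lam_snd) simp
qed

lemma skew_diagonal:
  assumes "t^2 < 1"
  shows "skew t t = t * (9 - t^2) / sqrt ((3 + t^2)^3)"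
proof -
  have "wpoly t t = (2 * (1 - t^2))^2 * (3 + t^2)^3" unfolding wpoly_def by algebra
  then have "sqrt (wpoly t t) = 2 * (1 - t^2) * sqrt ((3 + t^2)^3)"
    using assms by (simp add: real_sqrt_mult)
  moreover have "npoly t t = 2 * (1 - t^2) * (t * (9 - t^2))" unfolding npoly_def by algebra
  ultimately show ?thesis using assms by (simp add: skew_def)
qed

lemma skew_diagonal_tendsto: "((\<lambda>t. skew t t) \<longlongrightarrow> 1) (at_left 1)"
proof -
  have "((\<lambda>t. t * (9 - t^2) / sqrt ((3 + t^2)^3)) \<longlongrightarrow> 1) (at_left (1 :: real))"
    by real_asymp
  moreover have "eventually (\<lambda>t. t * (9 - t^2) / sqrt ((3 + t^2)^3) = skew t t) (at_left 1)"
    using eventually_at_left_real[OF zero_less_one]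
    by eventually_elim (auto simp: skew_diagonal abs_square_less_1)
  ultimately show ?thesis by (rule Lim_transform_eventually)
qed

lemma ex_mu_one_eq:
  assumes "m \<ge> 1"
  shows "\<exists>b. -1 \<le> b \<and> b < 1 \<and> mu 1 b = m"
proof -
  define k where "k = sqrt ((m + 1) / 2)"
  have k: "k \<ge> 1" "k^2 = (m + 1) / 2" using assms by (auto simp: k_def)
  define b where "b = (k - 3) / (k + 1)"
  have b: "-1 \<le> b" "b < 1" using k by (simp_all add: b_def field_simps)
  have "(3 + b) / (1 - b) = k" using k by (simp add: b_def field_simps)
  then have "mu 1 b = m" using mu_one[OF b(2)] k by (simp add: field_simps)
  with b show ?thesis by blast
qed

text \<open>Follow the level curve \<open>lam = l\<close>, parametrized by \<open>b\<close>, until \<open>skew\<close> takes the value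
  \<open>(m - l)/(m + l)\<close> that \<open>(l, m)\<close> itself has.\<close>

lemma ex_lam_mu_eq_interior:
  assumes "l > 1" "m \<ge> 1"
  shows "\<exists>a b. -1 \<le> b \<and> b < a \<and> a < 1 \<and> lam a b = l \<and> mu a b = m"
proof -
  define r0 where "r0 = (m - l) / (m + l)"
  have "r0 < 1" using assms by (simp add: r0_def)
  then have "eventually (\<lambda>t. r0 < skew t t \<and> t \<in> {0<..<1}) (at_left 1)"
    using order_tendstoD(1)[OF skew_diagonal_tendsto] eventually_at_left_real[OF zero_less_one]
    by (intro eventually_conj)
  then obtain t where t: "0 < t" "t < 1" "r0 < skew t t"
    using eventually_happens'[of "at_left (1::real)"] by auto
  define h where "h y = skew (lam_root l y) y" for y
  have root: "y < lam_root l y" "lam_root l y < 1" "lam (lam_root l y) y = l" if "y \<in> {-1..t}" for y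
    using that lam_root[of y l] assms t by auto
  have "continuous_on {-1..t} h"
    unfolding h_def using t assms root
    by (intro continuous_on_skew continuous_on_lam_root continuous_on_id wpoly_pos) force+
  moreover have "h (-1) \<le> r0"
  proof -
    have "h (-1) = (1 - l) / (l + 1)"
      using root[of "-1"] t skew_eq[of "-1" "lam_root l (-1)"] mu_minus_one[of "lam_root l (-1)"]
      by (simp add: h_def)
    also have "\<dots> \<le> r0"
      using assms by (simp add: r0_def field_simps mult_right_mono)
    finally show ?thesis .
  qed
  moreover have "r0 \<le> h t"
    using skew_strict_increasing[of t t "lam_root l t"] root[of t] t by (simp add: h_def)
  ultimately obtain y where y: "-1 \<le> y" "y \<le> t" "h y = r0"
    using IVT'[of h "-1" r0 t] t by auto
  define a where "a = lam_root l y"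
  have a: "y < a" "a < 1" "lam a y = l" using root[of y] y by (auto simp: a_def)
  have "(mu a y - l) / (l + mu a y) = (m - l) / (m + l)"
    using skew_eq[of y a] a y by (simp add: h_def a_def r0_def)
  moreover have "l + mu a y > 0" using mu_ge_one[of y a] a y assms by simp
  ultimately have "mu a y = m" using assms by (simp add: field_simps)
  then show ?thesis using a y by blast
qed

lemma image_lam_mu: "(\<lambda>(a, b). (lam a b, mu a b)) ` frakA = Omega"
proof
  show "(\<lambda>(a, b). (lam a b, mu a b)) ` frakA \<subseteq> Omega"
    using lam_ge_one mu_ge_one by (auto simp: frakA_def Omega_def)
next
  have "\<exists>a b. (a, b) \<in> frakA \<and> lam a b = l \<and> mu a b = m" if "l \<ge> 1" "m \<ge> 1" for l m
  proof (cases "l = 1")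
    case True
    then show ?thesis
      using ex_mu_one_eq[OF \<open>m \<ge> 1\<close>] lam_one by (force simp: frakA_def)
  next
    case False
    then show ?thesis
      using ex_lam_mu_eq_interior[of l m] that by (force simp: frakA_def)
  qed
  then show "Omega \<subseteq> (\<lambda>(a, b). (lam a b, mu a b)) ` frakA"
    by (force simp: Omega_def)
qed

lemma bij_betw_image_Collect:
  assumes "bij_betw f A B" "\<And>x. x \<in> A \<Longrightarrow> Q (f x) \<longleftrightarrow> P x"
  shows "f ` {x \<in> A. P x} = {y \<in> B. Q y}"
  using assms unfolding bij_betw_def by auto

lemma solution_iff_lam_mu:
  assumes "(a, b) \<in> frakA"
  shows "q \<in> Omega \<and> sys a b (fst q) (snd q) \<longleftrightarrow> q = (lam a b, mu a b)"
proof -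
  have ab: "-1 \<le> b" "b < a" "a \<le> 1" using assms by (auto simp: frakA_def)
  then show ?thesis
    using sys_iff_lam_mu[OF ab, of "fst q" "snd q"] lam_ge_one[OF ab] mu_ge_one[OF ab]
    by (cases q) (auto simp: Omega_def)
qed

lemma corr_eq: "(a, b) \<in> frakA \<Longrightarrow> corr (a, b) = (lam a b, mu a b)"
  using solution_iff_lam_mu unfolding corr_def by simp

lemma bij_betw_corr: "bij_betw corr frakA Omega"
proof -
  have "bij_betw (\<lambda>(a, b). (lam a b, mu a b)) frakA Omega"
    using inj_on_lam_mu image_lam_mu by (simp add: bij_betw_def)
  then show ?thesis
    by (rule bij_betw_cong[THEN iffD2, rotated]) (auto simp: corr_eq)
qed

theorem theorem3p2:
  shows "(\<forall>p\<in>frakA. \<exists>!q. q \<in> Omega \<and> sys (fst p) (snd p) (fst q) (snd q))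
    \<and> bij_betw corr frakA Omega
    \<and> corr ` {(a, al). -1 < al \<and> al < a \<and> a < 1} = {(l, m). l > 1 \<and> m > 1}
    \<and> corr ` {p \<in> frakA. fst p = 1} = {q \<in> Omega. fst q = 1}
    \<and> corr ` {p \<in> frakA. snd p = -1} = {q \<in> Omega. snd q = 1}
    \<and> corr (1, -1) = (1, 1)"
proof -
  have "\<exists>!q. q \<in> Omega \<and> sys (fst p) (snd p) (fst q) (snd q)" if "p \<in> frakA" for p
    using solution_iff_lam_mu[of "fst p" "snd p"] that by simp
  moreover have "fst (corr p) = 1 \<longleftrightarrow> fst p = 1" "snd (corr p) = 1 \<longleftrightarrow> snd p = -1"
    if "p \<in> frakA" for p
    using that corr_eq lam_eq_one_iff mu_eq_one_iff by (auto simp: frakA_def)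
  moreover have "{(a, al). -1 < al \<and> al < a \<and> a < 1} = {p \<in> frakA. \<not> (fst p = 1 \<or> snd p = -1)}"
    "{(l, m). l > 1 \<and> m > 1} = {q \<in> Omega. \<not> (fst q = 1 \<or> snd q = 1)}"
    by (auto simp: frakA_def Omega_def)
  moreover have "corr (1, -1) = (1, 1)"
    using corr_eq[of 1 "-1"] lam_one[of "-1"] mu_minus_one[of 1] by (simp add: frakA_def)
  ultimately show ?thesis
    using bij_betw_corr by (simp add: bij_betw_image_Collect)
qed

end
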